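(* Let $V$ be an $N$-dimensional vector space over $\mathbb{F}_q$ and $\mathcal{F},\mathcal{G}\subset V$ spanning families with extended families $\overline{\mathcal{F}},\overline{\mathcal{G}}$. If there is a matroid isomorphism $\psi:\overline{\mathcal{F}}\to\overline{\mathcal{G}}$ with $\psi(\mathcal{F})=\mathcal{G}$, then $|S^{\mathcal{F}}_t(0)|=|S^{\mathcal{G}}_t(0)|$ for every $t\in\mathbb{N}$.
   Context: A spanning family is a set of pairwise linearly independent nonzero vectors spanning $V$; $\operatorname{wt}_{\mathcal{F}}(v)=\min\{|I|:I\subseteq\mathcal{F},v\in\langle I\rangle\}$ and $S^{\mathcal{F}}_t(0)=\{v\in V:\operatorname{wt}_{\mathcal{F}}(v)=t\}$. A hyperplane generated by vectors in $\mathcal{F}$ is the span of $N-1$ linearly independent vectors of $\mathcal{F}$; the extended family $\overline{\mathcal{F}}$ is the set of vectors $v$ (one representative per line) such that $\langle v\rangle$ is an intersection of hyperplanes generated by vectors in $\mathcal{F}$ (one has $\mathcal{F}\subseteq\overline{\mathcal{F}}$). The matroid of a set of vectors has that set as ground set and its linearly independent subsets as independent sets; a matroid isomorphism $\psi:\overline{\mathcal{F}}\to\overline{\mathcal{G}}$ is a bijection such that a subset $I\subseteq\overline{\mathcal{F}}$ is linearly independent iff $\psi(I)$ is. *)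

theory Defs
  imports "HOL.Vector_Spaces"
begin

definition lin_indep :: "('a::field \<Rightarrow> 'v::ab_group_add \<Rightarrow> 'v) \<Rightarrow> 'v set \<Rightarrow> bool" where
  "lin_indep scale I \<longleftrightarrow> \<not> module.dependent scale I"

definition spanning_family :: "('a::field \<Rightarrow> 'v::ab_group_add \<Rightarrow> 'v) \<Rightarrow> 'v set \<Rightarrow> bool" where
  "spanning_family scale F \<longleftrightarrow>
     0 \<notin> F \<and>
     (\<forall>u\<in>F. \<forall>v\<in>F. u \<noteq> v \<longrightarrow> lin_indep scale {u, v}) \<and>
     module.span scale F = UNIV"

definition wt :: "('a::field \<Rightarrow> 'v::ab_group_add \<Rightarrow> 'v) \<Rightarrow> 'v set \<Rightarrow> 'v \<Rightarrow> nat" where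
  "wt scale F v = (LEAST n. \<exists>I. I \<subseteq> F \<and> finite I \<and> card I = n \<and> v \<in> module.span scale I)"

definition sphere0 :: "('a::field \<Rightarrow> 'v::ab_group_add \<Rightarrow> 'v) \<Rightarrow> 'v set \<Rightarrow> nat \<Rightarrow> 'v set" where
  "sphere0 scale F t = {v. wt scale F v = t}"

definition gen_hyperplanes :: "('a::field \<Rightarrow> 'v::ab_group_add \<Rightarrow> 'v) \<Rightarrow> nat \<Rightarrow> 'v set \<Rightarrow> 'v set set" where
  "gen_hyperplanes scale N F =
     {module.span scale B | B. B \<subseteq> F \<and> finite B \<and> card B = N - 1 \<and> lin_indep scale B}"

definition extended_line :: "('a::field \<Rightarrow> 'v::ab_group_add \<Rightarrow> 'v) \<Rightarrow> nat \<Rightarrow> 'v set \<Rightarrow> 'v \<Rightarrow> bool" where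
  "extended_line scale N F v \<longleftrightarrow>
     v \<noteq> 0 \<and> (\<exists>\<H>. \<H> \<subseteq> gen_hyperplanes scale N F \<and> module.span scale {v} = \<Inter>\<H>)"

definition is_extended_family :: "('a::field \<Rightarrow> 'v::ab_group_add \<Rightarrow> 'v) \<Rightarrow> nat \<Rightarrow> 'v set \<Rightarrow> 'v set \<Rightarrow> bool" where
  "is_extended_family scale N F Fb \<longleftrightarrow>
     F \<subseteq> Fb \<and>
     (\<forall>v\<in>Fb. extended_line scale N F v) \<and>
     (\<forall>u\<in>Fb. \<forall>v\<in>Fb. u \<noteq> v \<longrightarrow> module.span scale {u} \<noteq> module.span scale {v}) \<and>
     (\<forall>v. extended_line scale N F v \<longrightarrow> (\<exists>u\<in>Fb. module.span scale {u} = module.span scale {v}))"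

definition matroid_iso :: "('a::field \<Rightarrow> 'v::ab_group_add \<Rightarrow> 'v) \<Rightarrow> ('v \<Rightarrow> 'v) \<Rightarrow> 'v set \<Rightarrow> 'v set \<Rightarrow> bool" where
  "matroid_iso scale \<psi> Fb Gb \<longleftrightarrow>
     bij_betw \<psi> Fb Gb \<and> (\<forall>I\<subseteq>Fb. lin_indep scale I \<longleftrightarrow> lin_indep scale (\<psi> ` I))"

end

theory Submission
  imports Defs
begin

(* For v in V let T(v) be the set of extended-family vectors lying in every subspace that
   contains v and is spanned by vectors of F.  Every intersection of hyperplanes generated by F
   is spanned by the extended-family vectors it contains: by induction on the dimension, a
   subspace that is not a line is covered by its sections with generated hyperplanes, and a line
   that is such an intersection has a representative in the extended family by definition.
   Hence v lies in the span of T(v), so wt_F(v) only depends on T(v), and for every possible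
   value T, |span T| is the sum of #{v. T(v) = T'} over the possible values T' contained in T.
   The matroid isomorphism maps the possible values for F bijectively to those for G, preserving
   inclusion, weight and |span T| = q^(rank T); so induction on T gives
   #{v. T_F(v) = T} = #{w. T_G(w) = psi(T)}, and summing over the T of weight t proves the
   claim. *)

lemma bij_betw_restrict_pred:
  assumes "bij_betw f A B" "\<And>a. a \<in> A \<Longrightarrow> Q (f a) \<longleftrightarrow> P a"
  shows "bij_betw f {a \<in> A. P a} {b \<in> B. Q b}"
  using assms unfolding bij_betw_def inj_on_def by auto

lemma inj_on_image_psubset_iff:
  "inj_on f C \<Longrightarrow> A \<subseteq> C \<Longrightarrow> B \<subseteq> C \<Longrightarrow> f ` A \<subset> f ` B \<longleftrightarrow> A \<subset> B"
  unfolding inj_on_def by blast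

context vector_space
begin

lemma card_span_independent:
  assumes "finite (UNIV :: 'a set)" "finite B" "independent B"
  shows "finite (span B) \<and> card (span B) = card (UNIV :: 'a set) ^ card B"
  using assms(2,3)
proof (induction B rule: finite_induct)
  case empty
  then show ?case by simp
next
  case (insert x B)
  have "independent B" and x: "x \<notin> span B"
    using insert.prems insert.hyps(2) by (auto simp: independent_insert)
  with insert.IH have fin: "finite (span B)"
    and card: "card (span B) = card (UNIV :: 'a set) ^ card B"
    by auto
  define f where "f = (\<lambda>(k, y). scale k x + y)"
  have span_eq: "span (insert x B) = f ` (UNIV \<times> span B)"
  proof (intro set_eqI iffI)
    fix z assume "z \<in> span (insert x B)"
    then obtain k where "z - scale k x \<in> span B" by (auto simp: span_breakdown_eq)
    then show "z \<in> f ` (UNIV \<times> span B)"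
      by (auto simp: f_def image_iff intro!: exI[of _ k] bexI[of _ "z - scale k x"])
  next
    fix z assume "z \<in> f ` (UNIV \<times> span B)"
    then obtain k y where "y \<in> span B" "z = scale k x + y" by (auto simp: f_def)
    then show "z \<in> span (insert x B)" by (auto simp: span_breakdown_eq intro!: exI[of _ k])
  qed
  have "inj_on f (UNIV \<times> span B)"
  proof (rule inj_onI, clarsimp simp: f_def)
    fix k y k' y'
    assume y: "y \<in> span B" "y' \<in> span B" and eq: "scale k x + y = scale k' x + y'"
    have "scale (k - k') x = y' - y"
      using eq by (simp add: scale_left_diff_distrib algebra_simps)
    with y have "scale (k - k') x \<in> span B" by (simp add: span_diff)
    then have "k = k'"
      using x span_scale[of "scale (k - k') x" B "inverse (k - k')"]
      by (cases "k = k'") (auto simp: scale_scale)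
    with eq show "k = k' \<and> y = y'" by simp
  qed
  then have "card (span (insert x B)) = card (UNIV :: 'a set) * card (span B)"
    by (simp add: span_eq card_image card_cartesian_product)
  with fin card assms(1) insert.hyps show ?case
    by (simp add: span_eq)
qed

lemma span_eq_Int_span_delete:
  assumes "independent B" "finite B" "J \<subseteq> B"
  shows "span J = span B \<inter> (\<Inter>b\<in>B - J. span (B - {b}))"
proof
  show "span J \<subseteq> span B \<inter> (\<Inter>b\<in>B - J. span (B - {b}))"
    using assms(3) by (auto intro: span_mono[THEN subsetD])
next
  show "span B \<inter> (\<Inter>b\<in>B - J. span (B - {b})) \<subseteq> span J"
  proof
    fix x assume x: "x \<in> span B \<inter> (\<Inter>b\<in>B - J. span (B - {b}))"
    have coeff_0: "representation B x b = 0" if "b \<in> B - J" for b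
    proof -
      have "representation B x = representation (B - {b}) x"
        using x that by (intro representation_extend[OF assms(1)]) auto
      then show ?thesis using representation_ne_zero[of "B - {b}" x b] by auto
    qed
    have "x = (\<Sum>b\<in>B. scale (representation B x b) b)"
      using sum_representation_eq[OF assms(1) _ assms(2) order_refl] x by simp
    also have "\<dots> = (\<Sum>b\<in>J. scale (representation B x b) b)"
      using coeff_0 assms(2,3) by (intro sum.mono_neutral_right) auto
    also have "\<dots> \<in> span J" by (intro span_sum span_scale span_base)
    finally show "x \<in> span J" .
  qed
qed

lemma matroid_iso_inv_into:
  assumes "matroid_iso scale \<psi> A B"
  shows "matroid_iso scale (inv_into A \<psi>) B A"
proof -
  have bij: "bij_betw \<psi> A B"
    and indep: "\<And>I. I \<subseteq> A \<Longrightarrow> lin_indep scale I \<longleftrightarrow> lin_indep scale (\<psi> ` I)"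
    using assms unfolding matroid_iso_def by auto
  have "lin_indep scale I \<longleftrightarrow> lin_indep scale (inv_into A \<psi> ` I)" if "I \<subseteq> B" for I
  proof -
    have "inv_into A \<psi> ` I \<subseteq> A" and "\<psi> ` inv_into A \<psi> ` I = I"
      using that bij by (auto simp: bij_betw_def image_image image_subset_iff inv_into_into
          f_inv_into_f[of _ \<psi> A] subset_iff cong: image_cong)
    then show ?thesis using indep by metis
  qed
  with bij_betw_inv_into[OF bij] show ?thesis
    unfolding matroid_iso_def by auto
qed

lemma matroid_iso_span:
  assumes iso: "matroid_iso scale \<psi> A B" and "S \<subseteq> A" "x \<in> A" "x \<in> span S"
  shows "\<psi> x \<in> span (\<psi> ` S)"
proof -
  have inj: "inj_on \<psi> A" and indep: "\<And>I. I \<subseteq> A \<Longrightarrow> independent I \<longleftrightarrow> independent (\<psi> ` I)"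
    using iso unfolding matroid_iso_def lin_indep_def bij_betw_def by auto
  obtain J where J: "J \<subseteq> S" "independent J" "S \<subseteq> span J"
    using maximal_independent_subset[of S] by blast
  have "x \<in> span J"
    using assms(4) J(3) by (metis span_minimal span_subspace subspace_span subsetD)
  show ?thesis
  proof (cases "x \<in> J")
    case True
    with J(1) show ?thesis by (blast intro: span_base)
  next
    case False
    have "dependent (insert x J)"
      using independent_insert[of x J] \<open>x \<in> span J\<close> False by simp
    then have "dependent (\<psi> ` insert x J)"
      using indep[of "insert x J"] J(1) assms(2,3) by auto
    moreover have "\<psi> x \<notin> \<psi> ` J"
      using False inj J(1) assms(2,3) by (auto simp: inj_on_image_mem_iff)
    ultimately have "\<psi> x \<in> span (\<psi> ` J)"
      using indep[of J] J(1,2) assms(2) independent_insert[of "\<psi> x" "\<psi> ` J"] by auto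
    with J(1) show ?thesis by (meson image_mono span_mono subsetD)
  qed
qed

lemma matroid_iso_span_iff:
  assumes iso: "matroid_iso scale \<psi> A B" and "S \<subseteq> A" "x \<in> A"
  shows "\<psi> x \<in> span (\<psi> ` S) \<longleftrightarrow> x \<in> span S"
proof
  assume in_span: "\<psi> x \<in> span (\<psi> ` S)"
  have bij: "bij_betw \<psi> A B" using iso unfolding matroid_iso_def by simp
  then have "\<psi> ` S \<subseteq> B" "\<psi> x \<in> B" using assms(2,3) by (auto simp: bij_betw_def)
  with in_span have "inv_into A \<psi> (\<psi> x) \<in> span (inv_into A \<psi> ` \<psi> ` S)"
    by (intro matroid_iso_span[OF matroid_iso_inv_into[OF iso]])
  moreover have "inv_into A \<psi> ` \<psi> ` S = S"
    using assms(2) bij by (simp add: bij_betw_def)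
  ultimately show "x \<in> span S"
    using assms(3) bij by (simp add: bij_betw_def)
qed (rule matroid_iso_span[OF assms])

lemma matroid_iso_dim:
  assumes iso: "matroid_iso scale \<psi> A B" and "S \<subseteq> A"
  shows "dim (\<psi> ` S) = dim S"
proof -
  obtain J where J: "J \<subseteq> S" "independent J" "S \<subseteq> span J"
    using maximal_independent_subset[of S] by blast
  have inj: "inj_on \<psi> J"
    using iso J(1) assms(2) by (auto simp: matroid_iso_def bij_betw_def intro: inj_on_subset)
  have "independent (\<psi> ` J)"
    using iso J(1,2) assms(2) unfolding matroid_iso_def lin_indep_def by blast
  moreover have "span (\<psi> ` S) = span (\<psi> ` J)"
  proof -
    have "\<psi> y \<in> span (\<psi> ` J)" if "y \<in> S" for y
      using matroid_iso_span[OF iso, of J y] J that assms(2) by blast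
    with J(1) show ?thesis by (auto simp: span_eq intro: span_base)
  qed
  moreover have "span S = span J"
    using J by (auto simp: span_eq intro: span_base)
  ultimately show ?thesis
    using J(2) inj by (metis dim_span dim_eq_card_independent card_image)
qed

end

context finite_dimensional_vector_space
begin

lemma card_span:
  assumes "finite (UNIV :: 'a set)"
  shows "card (span S) = card (UNIV :: 'a set) ^ dim S"
proof -
  obtain J where "J \<subseteq> S" "independent J" "S \<subseteq> span J" "card J = dim S"
    using basis_exists[of S] by blast
  then have "span S = span J" by (auto simp: span_eq intro: span_base)
  with card_span_independent[OF assms finiteI_independent] show ?thesis
    using \<open>independent J\<close> \<open>card J = dim S\<close> by simp
qed

lemma finite_UNIV_if_finite_scalars:
  assumes "finite (UNIV :: 'a set)"
  shows "finite (UNIV :: 'b set)"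
  using card_span_independent[OF assms finite_Basis independent_Basis] by (simp add: span_Basis)

lemma subspace_subset_span_insert_Int:
  assumes "independent B" "card B + 1 = dimension" "x \<notin> span B" "subspace W" "x \<in> W"
  shows "W \<subseteq> span (insert x (W \<inter> span B))"
proof
  fix y assume y: "y \<in> W"
  have "independent (insert x B)" using assms(1,3) by (rule independent_insertI[rotated])
  moreover have "card (insert x B) = dimension"
    using assms(1-3) finiteI_independent span_base by (subst card_insert_disjoint) auto
  ultimately have "span (insert x B) = UNIV"
    using card_eq_dim[of "insert x B" UNIV] finiteI_independent[OF assms(1)]
    by (auto simp: dimension_def)
  then obtain k where "y - scale k x \<in> span B"
    by (metis UNIV_I span_breakdown_eq)
  moreover have "y - scale k x \<in> W"
    using y assms(4,5) by (intro subspace_diff subspace_scale)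
  ultimately show "y \<in> span (insert x (W \<inter> span B))"
    unfolding span_breakdown_eq by (blast intro: span_base)
qed

end

locale extended_spanning_family = finite_dimensional_vector_space scale Basis
  for scale :: "'a::field \<Rightarrow> 'v::ab_group_add \<Rightarrow> 'v" and Basis :: "'v set" +
  fixes N :: nat and F Fb :: "'v set"
  assumes dimension_eq: "dimension = N"
    and span_family: "span F = UNIV"
    and family_subset: "F \<subseteq> Fb"
    and extended_line_rep: "\<And>v. extended_line scale N F v \<Longrightarrow> \<exists>u\<in>Fb. span {u} = span {v}"
begin

lemma subspace_gen_hyperplane: "H \<in> gen_hyperplanes scale N F \<Longrightarrow> subspace H"
  unfolding gen_hyperplanes_def by auto

lemma basis_extend_in_family:
  assumes "J \<subseteq> F" "independent J"
  obtains B where "J \<subseteq> B" "B \<subseteq> F" "independent B" "span B = UNIV" "card B = N"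
proof -
  obtain B where B: "J \<subseteq> B" "B \<subseteq> F" "independent B" "F \<subseteq> span B"
    using maximal_independent_subset_extend[OF assms] by blast
  then have span_B: "span B = UNIV"
    using span_family by (metis span_minimal subspace_span top.extremum_uniqueI)
  moreover have "card B = N"
    using basis_card_eq_dim[of B UNIV] B(3) span_B dimension_eq by (simp add: dimension_def)
  ultimately show ?thesis using that B by blast
qed

lemma span_delete_in_gen_hyperplanes:
  assumes "B \<subseteq> F" "independent B" "card B = N" "b \<in> B"
  shows "span (B - {b}) \<in> gen_hyperplanes scale N F"
proof -
  have "independent (B - {b})" "finite (B - {b})" "card (B - {b}) = N - 1"
    using assms independent_mono[of B "B - {b}"] finiteI_independent by auto
  with assms(1) show ?thesis
    unfolding gen_hyperplanes_def lin_indep_def by blast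
qed

lemma gen_hyperplane_avoiding:
  assumes "x \<noteq> 0"
  obtains B where "B \<subseteq> F" "independent B" "card B + 1 = N" "x \<notin> span B"
    "span B \<in> gen_hyperplanes scale N F"
proof -
  obtain B where B: "B \<subseteq> F" "independent B" "span B = UNIV" "card B = N"
    using basis_extend_in_family[of "{}"] independent_empty by blast
  have "span {} = span B \<inter> (\<Inter>b\<in>B. span (B - {b}))"
    using span_eq_Int_span_delete[OF B(2) finiteI_independent[OF B(2)], of "{}"] by simp
  with assms B(3) obtain b where "b \<in> B" "x \<notin> span (B - {b})"
    by auto
  moreover have "card (B - {b}) + 1 = N"
    using \<open>b \<in> B\<close> B(4) card_Suc_Diff1[OF finiteI_independent[OF B(2)]] by simp
  ultimately show ?thesis
    using that[of "B - {b}"] B span_delete_in_gen_hyperplanes independent_mono[of B "B - {b}"] by blast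
qed

lemma span_eq_Inter_gen_hyperplanes:
  assumes "I \<subseteq> F"
  shows "span I = \<Inter>{H \<in> gen_hyperplanes scale N F. span I \<subseteq> H}"
proof
  obtain J where J: "J \<subseteq> I" "independent J" "I \<subseteq> span J"
    using maximal_independent_subset[of I] by blast
  then have span_I: "span I = span J"
    by (auto simp: span_eq intro: span_base)
  obtain B where B: "J \<subseteq> B" "B \<subseteq> F" "independent B" "span B = UNIV" "card B = N"
    using basis_extend_in_family[of J] J assms by blast
  have "span J = (\<Inter>b\<in>B - J. span (B - {b}))"
    using span_eq_Int_span_delete[OF B(3) finiteI_independent[OF B(3)] B(1)] B(4) by simp
  moreover have "(\<lambda>b. span (B - {b})) ` (B - J) \<subseteq> {H \<in> gen_hyperplanes scale N F. span I \<subseteq> H}"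
  proof (intro image_subsetI CollectI conjI)
    fix b assume "b \<in> B - J"
    then show "span (B - {b}) \<in> gen_hyperplanes scale N F"
      using span_delete_in_gen_hyperplanes[OF B(2,3,5)] by blast
    from \<open>b \<in> B - J\<close> B(1) have "J \<subseteq> B - {b}" by blast
    then show "span I \<subseteq> span (B - {b})" unfolding span_I by (rule span_mono)
  qed
  ultimately show "\<Inter>{H \<in> gen_hyperplanes scale N F. span I \<subseteq> H} \<subseteq> span I"
    unfolding span_I by (metis Inter_anti_mono)
qed blast

lemma line_subset_span_extended:
  assumes "\<H> \<subseteq> gen_hyperplanes scale N F" "x \<noteq> 0" "\<Inter>\<H> = span {x}"
  shows "\<Inter>\<H> \<subseteq> span (Fb \<inter> \<Inter>\<H>)"
proof -
  have "extended_line scale N F x"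
    using assms unfolding extended_line_def by auto
  then obtain u where "u \<in> Fb" "span {u} = \<Inter>\<H>"
    using extended_line_rep assms(3) by metis
  moreover from this have "u \<in> \<Inter>\<H>" by (auto intro: span_base)
  ultimately show ?thesis
    by (metis IntI empty_subsetI insert_subset span_mono)
qed

lemma line_or_subset_if_hyperplane_sections_subset:
  assumes W: "subspace W" and U: "subspace U"
    and sections: "\<And>H. H \<in> gen_hyperplanes scale N F \<Longrightarrow> \<not> W \<subseteq> H \<Longrightarrow> W \<inter> H \<subseteq> U"
  shows "W \<subseteq> U \<or> (\<exists>x. x \<noteq> 0 \<and> W = span {x})"
proof (cases "W \<subseteq> {0}")
  case True
  with U show ?thesis by (auto intro: subspace_0)
next
  case False
  then obtain x where x: "x \<in> W" "x \<noteq> 0" by blast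
  obtain B0 where B0: "independent B0" "card B0 + 1 = N" "x \<notin> span B0"
    "span B0 \<in> gen_hyperplanes scale N F"
    using gen_hyperplane_avoiding[OF x(2)] by metis
  have W_B0: "W \<subseteq> span (insert x (W \<inter> span B0))"
    using subspace_subset_span_insert_Int B0(1-3) W x(1) dimension_eq by simp
  show ?thesis
  proof (cases "W \<inter> span B0 \<subseteq> {0}")
    case True
    then have "insert x (W \<inter> span B0) \<subseteq> insert 0 {x}" by blast
    then have "span (insert x (W \<inter> span B0)) \<subseteq> span {x}"
      by (metis span_mono span_insert_0)
    with W_B0 x(1) W have "W = span {x}"
      by (intro subset_antisym span_minimal) auto
    with x(2) show ?thesis by blast
  next
    case False
    then obtain y where y: "y \<in> W" "y \<in> span B0" "y \<noteq> 0" by blast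
    obtain B1 where B1: "independent B1" "card B1 + 1 = N" "y \<notin> span B1"
      "span B1 \<in> gen_hyperplanes scale N F"
      using gen_hyperplane_avoiding[OF y(3)] by metis
    have "y \<in> U"
      using sections[OF B0(4)] x B0(3) y(1,2) by blast
    moreover have "W \<inter> span B1 \<subseteq> U"
      using sections[OF B1(4)] y(1) B1(3) by blast
    ultimately have "span (insert y (W \<inter> span B1)) \<subseteq> U"
      using U by (simp add: span_minimal)
    moreover have "W \<subseteq> span (insert y (W \<inter> span B1))"
      using subspace_subset_span_insert_Int B1(1-3) W y(1) dimension_eq by simp
    ultimately show ?thesis by blast
  qed
qed

lemma Inter_gen_hyperplanes_subset_span_extended:
  assumes "\<H> \<subseteq> gen_hyperplanes scale N F"
  shows "\<Inter>\<H> \<subseteq> span (Fb \<inter> \<Inter>\<H>)"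
  using assms
proof (induction "dim (\<Inter>\<H>)" arbitrary: \<H> rule: less_induct)
  case less
  define W where "W = \<Inter>\<H>"
  have W: "subspace W"
    using less.prems subspace_gen_hyperplane unfolding W_def by (blast intro: subspace_Inter)
  have "W \<inter> H \<subseteq> span (Fb \<inter> W)" if H: "H \<in> gen_hyperplanes scale N F" "\<not> W \<subseteq> H" for H
  proof -
    have "subspace (W \<inter> H)" using W H(1) subspace_gen_hyperplane by (blast intro: subspace_inter)
    moreover from H(2) have "W \<inter> H \<subset> W" by blast
    ultimately have "span (W \<inter> H) \<subset> span W"
      using W by (metis span_eq_iff)
    then have "dim (W \<inter> H) < dim W" by (rule dim_psubset)
    moreover have "W \<inter> H = \<Inter>(insert H \<H>)" unfolding W_def by blast
    ultimately have "W \<inter> H \<subseteq> span (Fb \<inter> (W \<inter> H))"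
      using less.hyps[of "insert H \<H>"] less.prems H(1) unfolding W_def by auto
    also have "\<dots> \<subseteq> span (Fb \<inter> W)" by (rule span_mono) blast
    finally show ?thesis .
  qed
  with W have "W \<subseteq> span (Fb \<inter> W) \<or> (\<exists>x. x \<noteq> 0 \<and> W = span {x})"
    by (intro line_or_subset_if_hyperplane_sections_subset) simp_all
  then show ?case
    using line_subset_span_extended[OF less.prems] unfolding W_def by metis
qed

lemma Inter_spans_subset_span_extended:
  assumes "\<I> \<subseteq> Pow F"
  shows "\<Inter>(span ` \<I>) \<subseteq> span (Fb \<inter> \<Inter>(span ` \<I>))"
proof -
  define \<H> where "\<H> = {H \<in> gen_hyperplanes scale N F. \<exists>I\<in>\<I>. span I \<subseteq> H}"
  have "\<Inter>\<H> \<subseteq> span I" if "I \<in> \<I>" for I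
  proof -
    have "\<Inter>\<H> \<subseteq> \<Inter>{H \<in> gen_hyperplanes scale N F. span I \<subseteq> H}"
      unfolding \<H>_def using that by (intro Inter_anti_mono) blast
    also have "\<dots> = span I"
      using span_eq_Inter_gen_hyperplanes that assms by blast
    finally show ?thesis .
  qed
  then have "\<Inter>(span ` \<I>) = \<Inter>\<H>"
    unfolding \<H>_def by blast
  then show ?thesis
    using Inter_gen_hyperplanes_subset_span_extended[of \<H>] by (simp add: \<H>_def)
qed

(* Flats (intersections of spans of subsets of F) are represented by the extended-family vectors
   they contain; by in_span_flat_of nothing is lost, and this is the form in which a matroid
   isomorphism of the extended families can transport them. *)
definition flat_of :: "'v \<Rightarrow> 'v set" where
  "flat_of v = Fb \<inter> \<Inter>(span ` {I. I \<subseteq> F \<and> v \<in> span I})"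

definition flats :: "'v set set" where
  "flats = {Fb \<inter> \<Inter>(span ` \<I>) | \<I>. \<I> \<subseteq> Pow F}"

definition flat_wt :: "'v set \<Rightarrow> nat" where
  "flat_wt T = (LEAST n. \<exists>I. I \<subseteq> F \<and> finite I \<and> card I = n \<and> T \<subseteq> span I)"

lemma in_span_flat_of: "v \<in> span (flat_of v)"
  using Inter_spans_subset_span_extended[of "{I. I \<subseteq> F \<and> v \<in> span I}"]
  unfolding flat_of_def by blast

lemma flat_of_in_flats: "flat_of v \<in> flats"
  unfolding flats_def flat_of_def by blast

lemma flats_subset: "T \<in> flats \<Longrightarrow> T \<subseteq> Fb"
  unfolding flats_def by auto

lemma flat_of_subset_span_iff:
  assumes "I \<subseteq> F"
  shows "flat_of v \<subseteq> span I \<longleftrightarrow> v \<in> span I"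
proof
  assume "flat_of v \<subseteq> span I"
  then have "span (flat_of v) \<subseteq> span I" by (simp add: span_minimal)
  with in_span_flat_of show "v \<in> span I" by blast
qed (use assms in \<open>auto simp: flat_of_def\<close>)

lemma in_span_flat_iff:
  assumes "T \<in> flats"
  shows "v \<in> span T \<longleftrightarrow> flat_of v \<subseteq> T"
proof
  obtain \<I> where \<I>: "\<I> \<subseteq> Pow F" "T = Fb \<inter> \<Inter>(span ` \<I>)"
    using assms unfolding flats_def by blast
  assume "v \<in> span T"
  moreover have "span T \<subseteq> span I" if "I \<in> \<I>" for I
  proof -
    have "T \<subseteq> span I" using \<I>(2) that by blast
    then show ?thesis by (simp add: span_minimal)
  qed
  ultimately show "flat_of v \<subseteq> T"
    using \<I> unfolding flat_of_def by blast
next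
  assume "flat_of v \<subseteq> T"
  then show "v \<in> span T"
    using in_span_flat_of span_mono by blast
qed

lemma wt_eq_flat_wt: "wt scale F v = flat_wt (flat_of v)"
proof -
  have "(\<exists>I. I \<subseteq> F \<and> finite I \<and> card I = n \<and> v \<in> span I) \<longleftrightarrow>
        (\<exists>I. I \<subseteq> F \<and> finite I \<and> card I = n \<and> flat_of v \<subseteq> span I)" for n
    using flat_of_subset_span_iff by blast
  then show ?thesis unfolding wt_def flat_wt_def by simp
qed

lemma finite_flats: "finite Fb \<Longrightarrow> finite flats"
  by (rule finite_subset[of _ "Pow Fb"]) (auto dest: flats_subset)

lemma card_span_flat:
  assumes "finite (UNIV :: 'v set)" "T \<in> flats"
  shows "card (span T) =
    card {v. flat_of v = T} + (\<Sum>T'\<in>{T' \<in> flats. T' \<subset> T}. card {v. flat_of v = T'})"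
proof -
  have "span T = (\<Union>T'\<in>{T' \<in> flats. T' \<subseteq> T}. {v. flat_of v = T'})"
    using in_span_flat_iff[OF assms(2)] flat_of_in_flats by auto
  moreover have "finite flats"
    using assms(1) finite_flats finite_subset[OF subset_UNIV] by blast
  ultimately have "card (span T) = (\<Sum>T'\<in>{T' \<in> flats. T' \<subseteq> T}. card {v. flat_of v = T'})"
    using assms(1) by (simp only:) (rule card_UN_disjoint; auto intro: finite_subset)
  moreover have "{T' \<in> flats. T' \<subseteq> T} = insert T {T' \<in> flats. T' \<subset> T}"
    using assms(2) by blast
  ultimately show ?thesis
    using \<open>finite flats\<close> by simp
qed

lemma card_sphere0:
  assumes "finite (UNIV :: 'v set)"
  shows "card (sphere0 scale F t) = (\<Sum>T\<in>{T \<in> flats. flat_wt T = t}. card {v. flat_of v = T})"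
proof -
  have "sphere0 scale F t = (\<Union>T\<in>{T \<in> flats. flat_wt T = t}. {v. flat_of v = T})"
    unfolding sphere0_def wt_eq_flat_wt using flat_of_in_flats by auto
  moreover have "finite flats"
    using assms(1) finite_flats finite_subset[OF subset_UNIV] by blast
  ultimately show ?thesis
    using assms(1) by (simp only:) (rule card_UN_disjoint; auto intro: finite_subset)
qed

end

lemma (in finite_dimensional_vector_space) extended_spanning_familyI:
  assumes "dimension = N" "spanning_family scale F" "is_extended_family scale N F Fb"
  shows "extended_spanning_family scale Basis N F Fb"
  using assms unfolding spanning_family_def is_extended_family_def
  by (intro extended_spanning_family.intro extended_spanning_family_axioms.intro)
    (auto simp: finite_dimensional_vector_space_axioms)

locale extended_families_iso =
  F: extended_spanning_family scale Basis N F Fb + G: extended_spanning_family scale Basis N G Gb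
  for scale :: "'a::{field,finite} \<Rightarrow> 'v::ab_group_add \<Rightarrow> 'v" and Basis N F Fb G Gb +
  fixes \<psi> :: "'v \<Rightarrow> 'v"
  assumes iso: "matroid_iso scale \<psi> Fb Gb"
    and image_family: "\<psi> ` F = G"
begin

lemma bij_betw_extended: "bij_betw \<psi> Fb Gb"
  using iso unfolding matroid_iso_def by simp

lemma finite_vectors: "finite (UNIV :: 'v set)"
  using F.finite_UNIV_if_finite_scalars[OF finite_UNIV] .

lemma extended_families_iso_inv_into: "extended_families_iso scale Basis N G Gb F Fb (inv_into Fb \<psi>)"
proof -
  have "inv_into Fb \<psi> ` G = F"
    using image_family F.family_subset bij_betw_extended by (auto simp: bij_betw_def)
  then show ?thesis
    using F.matroid_iso_inv_into[OF iso]
    by (intro extended_families_iso.intro extended_families_iso_axioms.intro)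
      (simp_all add: F.extended_spanning_family_axioms G.extended_spanning_family_axioms)
qed

lemma image_subset_span_image_iff:
  assumes "T \<subseteq> Fb" "I \<subseteq> Fb"
  shows "\<psi> ` T \<subseteq> F.span (\<psi> ` I) \<longleftrightarrow> T \<subseteq> F.span I"
  using F.matroid_iso_span_iff[OF iso assms(2)] assms(1) by (auto simp: image_subset_iff)

lemma image_flat:
  assumes "T \<in> F.flats"
  shows "\<psi> ` T \<in> G.flats"
proof -
  obtain \<I> where \<I>: "\<I> \<subseteq> Pow F" "T = Fb \<inter> \<Inter>(F.span ` \<I>)"
    using assms unfolding F.flats_def by blast
  have "\<psi> x \<in> \<Inter>(F.span ` (image \<psi> ` \<I>)) \<longleftrightarrow> x \<in> \<Inter>(F.span ` \<I>)" if "x \<in> Fb" for x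
    using that \<I>(1) F.family_subset F.matroid_iso_span_iff[OF iso] by (auto 0 3)
  then have "bij_betw \<psi> {x \<in> Fb. x \<in> \<Inter>(F.span ` \<I>)} {y \<in> Gb. y \<in> \<Inter>(F.span ` (image \<psi> ` \<I>))}"
    by (intro bij_betw_restrict_pred[OF bij_betw_extended])
  then have "\<psi> ` T = Gb \<inter> \<Inter>(F.span ` (image \<psi> ` \<I>))"
    unfolding \<I>(2) bij_betw_def by (metis Int_def)
  moreover have "image \<psi> ` \<I> \<subseteq> Pow G"
    using \<I>(1) image_family by blast
  ultimately show ?thesis
    unfolding G.flats_def by blast
qed

lemma bij_betw_flats: "bij_betw (image \<psi>) F.flats G.flats"
proof -
  interpret inv: extended_families_iso scale Basis N G Gb F Fb "inv_into Fb \<psi>"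
    by (rule extended_families_iso_inv_into)
  show ?thesis
  proof (rule bij_betw_byWitness[where f' = "image (inv_into Fb \<psi>)"])
    show "\<forall>T\<in>F.flats. inv_into Fb \<psi> ` \<psi> ` T = T"
      using bij_betw_extended F.flats_subset by (simp add: bij_betw_def)
    show "\<forall>T\<in>G.flats. \<psi> ` inv_into Fb \<psi> ` T = T"
      using bij_betw_extended G.flats_subset by (simp add: bij_betw_def image_inv_into_cancel)
    show "image \<psi> ` F.flats \<subseteq> G.flats"
      using image_flat by blast
    show "image (inv_into Fb \<psi>) ` G.flats \<subseteq> F.flats"
      using inv.image_flat by blast
  qed
qed

lemma flat_wt_image:
  assumes "T \<subseteq> Fb"
  shows "G.flat_wt (\<psi> ` T) = F.flat_wt T"
proof -
  have image_simps: "finite (\<psi> ` I) \<longleftrightarrow> finite I" "card (\<psi> ` I) = card I"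
    "\<psi> ` T \<subseteq> F.span (\<psi> ` I) \<longleftrightarrow> T \<subseteq> F.span I" if "I \<subseteq> F" for I
  proof -
    have "I \<subseteq> Fb" using that F.family_subset by blast
    moreover from this have "inj_on \<psi> I"
      using bij_betw_extended by (auto simp: bij_betw_def intro: inj_on_subset)
    ultimately show "finite (\<psi> ` I) \<longleftrightarrow> finite I" "card (\<psi> ` I) = card I"
      "\<psi> ` T \<subseteq> F.span (\<psi> ` I) \<longleftrightarrow> T \<subseteq> F.span I"
      using image_subset_span_image_iff[OF assms] by (simp_all add: finite_image_iff card_image)
  qed
  have "(\<exists>J. J \<subseteq> G \<and> finite J \<and> card J = n \<and> \<psi> ` T \<subseteq> F.span J) \<longleftrightarrow>
        (\<exists>I. I \<subseteq> F \<and> finite I \<and> card I = n \<and> T \<subseteq> F.span I)" for n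
  proof -
    have "(\<exists>J. J \<subseteq> G \<and> finite J \<and> card J = n \<and> \<psi> ` T \<subseteq> F.span J) \<longleftrightarrow>
        (\<exists>I. I \<subseteq> F \<and> finite (\<psi> ` I) \<and> card (\<psi> ` I) = n \<and> \<psi> ` T \<subseteq> F.span (\<psi> ` I))"
      unfolding image_family[symmetric] subset_image_iff by blast
    also have "\<dots> \<longleftrightarrow> (\<exists>I. I \<subseteq> F \<and> finite I \<and> card I = n \<and> T \<subseteq> F.span I)"
      by (simp add: image_simps cong: conj_cong)
    finally show ?thesis .
  qed
  then show ?thesis
    unfolding F.flat_wt_def G.flat_wt_def by simp
qed

lemma card_span_image:
  assumes "T \<subseteq> Fb"
  shows "card (F.span (\<psi> ` T)) = card (F.span T)"
  using F.card_span[OF finite_UNIV] F.matroid_iso_dim[OF iso assms] by simp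

lemma card_flat_of_image:
  assumes "T \<in> F.flats"
  shows "card {v. G.flat_of v = \<psi> ` T} = card {v. F.flat_of v = T}"
  using assms
proof (induction "card T" arbitrary: T rule: less_induct)
  case less
  let ?c = "\<lambda>T. card {v. F.flat_of v = T}" and ?d = "\<lambda>T. card {v. G.flat_of v = T}"
  define A where "A = {T' \<in> F.flats. T' \<subset> T}"
  have T: "T \<subseteq> Fb" "finite T"
    using less.prems F.flats_subset finite_vectors
    by (auto intro: finite_subset)
  have bij_A: "bij_betw (image \<psi>) A {T'' \<in> G.flats. T'' \<subset> \<psi> ` T}"
    unfolding A_def using bij_betw_flats
  proof (rule bij_betw_restrict_pred)
    fix T' assume "T' \<in> F.flats"
    then show "\<psi> ` T' \<subset> \<psi> ` T \<longleftrightarrow> T' \<subset> T"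
      using T(1) bij_betw_extended F.flats_subset by (meson bij_betw_def inj_on_image_psubset_iff)
  qed
  have IH: "?d (\<psi> ` T') = ?c T'" if "T' \<in> A" for T'
    using that T(2) psubset_card_mono less.hyps unfolding A_def by blast
  have "?d (\<psi> ` T) + sum ?d {T'' \<in> G.flats. T'' \<subset> \<psi> ` T} = card (F.span (\<psi> ` T))"
    using G.card_span_flat[OF finite_vectors image_flat[OF less.prems]] by simp
  also have "\<dots> = card (F.span T)"
    using card_span_image[OF T(1)] .
  also have "\<dots> = ?c T + sum ?c A"
    unfolding A_def using F.card_span_flat[OF finite_vectors less.prems] by simp
  also have "sum ?c A = sum ?d {T'' \<in> G.flats. T'' \<subset> \<psi> ` T}"
    using sum.reindex_bij_betw[OF bij_A, of ?d] IH by simp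
  finally show ?case by simp
qed

lemma card_sphere0_image: "card (sphere0 scale F t) = card (sphere0 scale G t)"
proof -
  have bij_wt: "bij_betw (image \<psi>) {T \<in> F.flats. F.flat_wt T = t} {T \<in> G.flats. G.flat_wt T = t}"
    using bij_betw_flats by (rule bij_betw_restrict_pred) (simp add: flat_wt_image F.flats_subset)
  have "card (sphere0 scale F t) = (\<Sum>T\<in>{T \<in> F.flats. F.flat_wt T = t}. card {v. F.flat_of v = T})"
    using F.card_sphere0[OF finite_vectors] .
  also have "\<dots> = (\<Sum>T\<in>{T \<in> F.flats. F.flat_wt T = t}. card {v. G.flat_of v = \<psi> ` T})"
    using card_flat_of_image by simp
  also have "\<dots> = (\<Sum>T\<in>{T \<in> G.flats. G.flat_wt T = t}. card {v. G.flat_of v = T})"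
    by (rule sum.reindex_bij_betw[OF bij_wt])
  also have "\<dots> = card (sphere0 scale G t)"
    using G.card_sphere0[OF finite_vectors] by simp
  finally show ?thesis .
qed

end

theorem proposition6p7:
  fixes scale :: "'a::{field,finite} \<Rightarrow> 'v::ab_group_add \<Rightarrow> 'v"
    and N :: nat and F G Fb Gb :: "'v set" and \<psi> :: "'v \<Rightarrow> 'v"
  assumes "vector_space scale"
    and "\<exists>B. finite B \<and> lin_indep scale B \<and> module.span scale B = UNIV \<and> card B = N"
    and "spanning_family scale F" and "spanning_family scale G"
    and "is_extended_family scale N F Fb" and "is_extended_family scale N G Gb"
    and "matroid_iso scale \<psi> Fb Gb" and "\<psi> ` F = G"
  shows "\<forall>t::nat. card (sphere0 scale F t) = card (sphere0 scale G t)"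
proof
  fix t :: nat
  obtain B where B: "finite B" "lin_indep scale B" "module.span scale B = UNIV" "card B = N"
    using assms(2) by blast
  interpret finite_dimensional_vector_space scale B
    using assms(1) B unfolding lin_indep_def
    by (intro finite_dimensional_vector_space.intro finite_dimensional_vector_space_axioms.intro) auto
  have "dimension = N"
    using B(4) by (simp add: dimension_def)
  interpret extended_families_iso scale B N F Fb G Gb \<psi>
    using extended_spanning_familyI[OF \<open>dimension = N\<close>] assms(3-8)
    by (intro extended_families_iso.intro extended_families_iso_axioms.intro) auto
  show "card (sphere0 scale F t) = card (sphere0 scale G t)"
    by (rule card_sphere0_image)
qed

end
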